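(* Let $m,k$ be positive integers with $\gcd(k,m)=1$, $m$ odd and $m>k+2$. For $z\in\mathbb{F}_{2^k}$ define $f^{(z)}:\mathbb{F}_{2^m}\times\mathbb{F}_{2^m}\to\mathbb{F}_2$ by $f^{(z)}(x_1,x_2)={\rm Tr}_1^m(x_1x_2^{2^k+1})$ if ${\rm Tr}_1^k(z)=0$ and $f^{(z)}(x_1,x_2)={\rm Tr}_1^m(x_2x_1^{2^k+1})$ if ${\rm Tr}_1^k(z)=1$. Then $f:\mathbb{F}_{2^m}\times\mathbb{F}_{2^m}\times\mathbb{F}_{2^k}\times\mathbb{F}_{2^k}\to\mathbb{F}_2$, $f(x_1,x_2,y,z)=f^{(z)}(x_1,x_2)+{\rm Tr}_1^k(yz)$, is a GMM function that is not in the class $MM^{\#}$.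
   Context: ${\rm Tr}_a^b$ denotes the trace from $\mathbb{F}_{2^b}$ to $\mathbb{F}_{2^a}$. A GMM (generalized Maiorana–McFarland) function is one of the form $f(x,y,z)=f^{(z)}(x)+{\rm Tr}_1^k(yz)$ on $W\times\mathbb{F}_{2^k}\times\mathbb{F}_{2^k}$ with every $f^{(z)}$ bent on $W$. Two Boolean functions $f,g$ on an $\mathbb{F}_2$-space $X$ are EA-equivalent if $g(x)=f(L(x)+a)+\langle c,x\rangle+b$ with $L$ a linear permutation of $X$, $a,c\in X$, $b\in\mathbb{F}_2$. The Maiorana–McFarland class on $\mathbb{F}_{2^N}\times\mathbb{F}_{2^N}$ consists of functions ${\rm Tr}_1^N(x\pi(y))+g(y)$ with $\pi$ a permutation of $\mathbb{F}_{2^N}$ and $g$ arbitrary; $MM^{\#}$ is the set of Boolean functions on a $2N$-dimensional $\mathbb{F}_2$-space EA-equivalent (after a linear identification with $\mathbb{F}_{2^N}^2$) to such a function. *)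

theory Defs
  imports Main "HOL-Library.Z2" "HOL-Library.Product_Plus"
begin

text \<open>Absolute trace Tr_1^n of a field element, with value in F_2 (type bit).
  Tr n x = x + x^2 + ... + x^(2^(n-1)); for x in a field of order 2^n this lies in {0,1}.\<close>
definition Tr :: "nat \<Rightarrow> 'a::field \<Rightarrow> bit" where
  "Tr n x = (if (\<Sum>i<n. x ^ (2 ^ i)) = 0 then 0 else 1)"

text \<open>F_2-linear maps between F_2-spaces (= additive maps, as every scalar is 0 or 1).\<close>
definition f2_linear :: "('a::ab_group_add \<Rightarrow> 'b::ab_group_add) \<Rightarrow> bool" where
  "f2_linear L \<longleftrightarrow> (\<forall>x y. L (x + y) = L x + L y)"

definition chi :: "bit \<Rightarrow> int" where
  "chi b = (if b = 0 then 1 else -1)"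

text \<open>Walsh transform, indexed by the linear functional x |-> <u,x>.\<close>
definition walsh :: "('w::{finite,ab_group_add} \<Rightarrow> bit) \<Rightarrow> ('w \<Rightarrow> bit) \<Rightarrow> int" where
  "walsh f l = (\<Sum>x\<in>UNIV. chi (f x + l x))"

definition bent :: "('w::{finite,ab_group_add} \<Rightarrow> bit) \<Rightarrow> bool" where
  "bent f \<longleftrightarrow> (\<forall>l. f2_linear l \<longrightarrow> (walsh f l)^2 = int (card (UNIV :: 'w set)))"

definition is_GMM :: "nat \<Rightarrow> ('w::{finite,ab_group_add} \<times> 'b::{field,finite} \<times> 'b \<Rightarrow> bit) \<Rightarrow> bool" where
  "is_GMM k f \<longleftrightarrow> (\<exists>F :: 'b \<Rightarrow> 'w \<Rightarrow> bit. (\<forall>z. bent (F z)) \<and>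
      (\<forall>x y z. f (x, y, z) = F z x + Tr k (y * z)))"

definition EA_equiv :: "('x::ab_group_add \<Rightarrow> bit) \<Rightarrow> ('x \<Rightarrow> bit) \<Rightarrow> bool" where
  "EA_equiv f g \<longleftrightarrow> (\<exists>L a l b. f2_linear L \<and> bij L \<and> f2_linear (l :: 'x \<Rightarrow> bit) \<and>
      (\<forall>x. g x = f (L x + a) + l x + b))"

text \<open>MM^# relative to a field 'c of order 2^N: after a linear identification phi of the
  space with 'c x 'c, the function is EA-equivalent to Tr_1^N(x pi(y)) + g(y).\<close>
definition MM_sharp :: "nat \<Rightarrow> 'c::{field,finite} itself \<Rightarrow> ('x::ab_group_add \<Rightarrow> bit) \<Rightarrow> bool" where
  "MM_sharp N _ h \<longleftrightarrow> (\<exists>(phi :: 'x \<Rightarrow> 'c \<times> 'c) (pi :: 'c \<Rightarrow> 'c) (g :: 'c \<Rightarrow> bit).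
      f2_linear phi \<and> bij phi \<and> bij pi \<and>
      EA_equiv (\<lambda>(x, y). Tr N (x * pi y) + g y) (h \<circ> inv phi))"

end

theory Submission
  imports Defs "HOL-Computational_Algebra.Polynomial"
begin

(* Each component f^(z) is the Maiorana-McFarland bent function Tr(x1 pi(x2)) with the Gold
   permutation pi(x) = x^(2^k+1) (a permutation since gcd(2^k+1, 2^m-1) = 1 for m odd and
   coprime to k), or that function with its two variables swapped; hence f is GMM.

   Conversely, a function in MM# admits an (m+k)-dimensional subspace V of directions along
   which all its second derivatives D_a D_b vanish. The elements ((s,t),b,0) of V form a
   subspace of dimension at least m. At points with x2 = 0, the second derivative of
   Tr(x1 pi(x2)) in directions (s,t), (s',t') is affine in x1 with linear part
   Tr(x1 (pi(t+t') + pi(t) + pi(t'))) = Tr(x1 (t^(2^k) t' + t t'^(2^k))). Evaluating at points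
   whose last coordinate has trace 0, resp. 1, therefore forces t^(2^k) t' = t t'^(2^k), resp.
   the same identity for s and s', and since gcd(k,m) = 1 any two nonzero t-coordinates
   (s-coordinates) coincide. So that subspace has at most 4 * 2^k elements, contradicting
   m > k + 2. *)

(* The default simp rules of bit turn + and * into XOR and AND, which gets in the way of
   algebraic simplification. *)
declare add_bit_eq_xor [simp del] mult_bit_eq_and [simp del]

section \<open>Finite fields of characteristic two\<close>

(* The library's finite_field_power_card_eq_same is stated for the class finite_field, which
   a type variable of sort {field,finite} does not belong to. *)
lemma finite_field_power_card:
  fixes x :: "'a::{field,finite}"
  shows "x ^ card (UNIV :: 'a set) = x"
proof (cases "x = 0")
  case False
  have "(\<Prod>y\<in>UNIV-{0}. x * y) = (\<Prod>y\<in>UNIV-{0}. y)"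
    by (rule prod.reindex_bij_witness[of _ "\<lambda>y. y / x" "\<lambda>y. x * y"]) (use False in auto)
  then have "x ^ card (UNIV - {0::'a}) = 1"
    by (simp add: prod.distrib)
  moreover have "card (UNIV :: 'a set) = Suc (card (UNIV - {0::'a}))"
    using finite_UNIV_card_ge_0[where 'a='a] by simp
  ultimately show ?thesis
    by (metis power_Suc mult.right_neutral)
qed (simp add: finite_UNIV_card_ge_0)

lemma pos_if_card_eq_power_2:
  assumes "card (UNIV :: 'a::{field,finite} set) = 2 ^ n"
  shows "n > 0"
proof -
  have "card {0, 1::'a} \<le> card (UNIV :: 'a set)"
    by (rule card_mono) auto
  then show ?thesis
    using assms by (cases n) auto
qed

lemma CHAR_eq_2_if_card_eq_power_2:
  assumes "card (UNIV :: 'a::{field,finite} set) = 2 ^ n"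
  shows "CHAR('a) = 2"
proof -
  have "(-1::'a) ^ 2 ^ n = -1"
    using finite_field_power_card[of "-1::'a"] assms by simp
  moreover have "even ((2::nat) ^ n)"
    using pos_if_card_eq_power_2[OF assms] by simp
  ultimately have "of_nat 2 = (0::'a)"
    by (simp add: eq_neg_iff_add_eq_0)
  then have "CHAR('a) dvd 2"
    by (simp only: of_nat_eq_0_iff_char_dvd)
  then show ?thesis
    by (metis CHAR_not_1' One_nat_def prime_nat_iff two_is_prime_nat)
qed

lemma frobenius_add:
  assumes "CHAR('a::comm_semiring_1) = 2"
  shows "(x + y :: 'a) ^ 2 ^ j = x ^ 2 ^ j + y ^ 2 ^ j"
  by (rule freshmans_dream') (simp_all add: assms)

lemma add_self_eq_0_if_CHAR_2:
  assumes "CHAR('a::ring_1) = 2"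
  shows "x + x = (0::'a)"
  using of_nat_CHAR[where 'a='a] by (simp add: assms flip: mult_2)

lemma add_eq_0_iff_eq_if_CHAR_2:
  assumes "CHAR('a::ring_1) = 2"
  shows "x + y = (0::'a) \<longleftrightarrow> x = y"
  by (metis add_self_eq_0_if_CHAR_2[OF assms] add_right_cancel)

lemma power2_eq_self_imp_eq_1:
  assumes "(w::'a::field)\<^sup>2 = w" and "w \<noteq> 0"
  shows "w = 1"
  using assms by (simp add: power2_eq_square)

lemma power_2_power_add: "(w::'a::monoid_mult) ^ 2 ^ (a + b) = (w ^ 2 ^ b) ^ 2 ^ a"
  by (simp add: power_add mult.commute flip: power_mult)

lemma power_2_power_gcd:
  fixes w :: "'a::monoid_mult"
  shows "w ^ 2 ^ a = w \<Longrightarrow> w ^ 2 ^ b = w \<Longrightarrow> w ^ 2 ^ gcd a b = w"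
proof (induction a b rule: gcd_nat_induct)
  case (step a b)
  have multiple: "w ^ 2 ^ (q * b) = w" for q
    by (induction q) (simp_all add: power_2_power_add step.prems(2))
  have "w = (w ^ 2 ^ ((a div b) * b)) ^ 2 ^ (a mod b)"
    using step.prems(1) power_2_power_add[of w "a mod b" "(a div b) * b"] by simp
  then have "w ^ 2 ^ (a mod b) = w"
    by (simp add: multiple)
  then show ?case
    using step by (simp add: gcd_non_0_nat)
qed simp

lemma power_2_power_coprime:
  fixes w :: "'a::monoid_mult"
  assumes "coprime a b" and "w ^ 2 ^ a = w" and "w ^ 2 ^ b = w"
  shows "w\<^sup>2 = w"
  using power_2_power_gcd[OF assms(2,3)] assms(1) by simp

lemma frobenius_symmetric_imp_eq:
  assumes "card (UNIV :: 'a::{field,finite} set) = 2 ^ m" and "coprime k m"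
    and "s ^ 2 ^ k * t = s * (t::'a) ^ 2 ^ k"
  shows "s = 0 \<or> t = 0 \<or> s = t"
proof (rule ccontr)
  assume "\<not> ?thesis"
  then have "s \<noteq> 0" "t \<noteq> 0" "s \<noteq> t"
    by auto
  define w where "w = s / t"
  have "w ^ 2 ^ k = w"
    using assms(3) \<open>s \<noteq> 0\<close> \<open>t \<noteq> 0\<close> by (simp add: w_def power_divide field_simps)
  moreover have "w ^ 2 ^ m = w"
    using finite_field_power_card[of w] assms(1) by simp
  ultimately have "w\<^sup>2 = w"
    using power_2_power_coprime assms(2) by blast
  then have "w = 1"
    by (rule power2_eq_self_imp_eq_1) (simp add: w_def \<open>s \<noteq> 0\<close> \<open>t \<noteq> 0\<close>)
  with \<open>t \<noteq> 0\<close> \<open>s \<noteq> t\<close> show False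
    by (simp add: w_def)
qed

lemma bij_gold_power:
  assumes "card (UNIV :: 'a::{field,finite} set) = 2 ^ m" and "coprime k m" and "odd m"
  shows "bij (\<lambda>x::'a. x ^ (2 ^ k + 1))"
proof -
  have "x = y" if eq: "x ^ (2 ^ k + 1) = y ^ (2 ^ k + 1)" for x y :: 'a
  proof (cases "y = 0")
    case False
    define w where "w = x / y"
    have "w ^ (2 ^ k + 1) = 1"
      using eq False by (simp add: w_def power_divide)
    then have "w \<noteq> 0" and inverse: "inverse w = w ^ 2 ^ k"
      by (auto intro: inverse_unique)
    then have "w ^ 2 ^ (k + k) = w"
      by (simp add: power_2_power_add power_inverse flip: inverse)
    moreover have "w ^ 2 ^ m = w"
      using finite_field_power_card[of w] assms(1) by simp
    moreover have "coprime (k + k) m"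
      using assms(2,3) by (simp flip: mult_2 add: coprime_mult_left_iff)
    ultimately have "w\<^sup>2 = w"
      using power_2_power_coprime by blast
    then have "w = 1"
      using \<open>w \<noteq> 0\<close> by (rule power2_eq_self_imp_eq_1)
    with False show ?thesis
      by (simp add: w_def)
  qed (use eq in simp)
  then have "inj (\<lambda>x::'a. x ^ (2 ^ k + 1))"
    by (rule injI)
  then show ?thesis
    by (simp add: bij_def finite_UNIV_inj_surj)
qed

lemma gold_power_add:
  assumes "CHAR('a::comm_ring_1) = 2"
  shows "(s + t :: 'a) ^ (2 ^ k + 1) + s ^ (2 ^ k + 1) + t ^ (2 ^ k + 1) = s ^ 2 ^ k * t + s * t ^ 2 ^ k"
proof -
  have "(s + t) ^ (2 ^ k + 1) = (s ^ 2 ^ k * t + s * t ^ 2 ^ k) + (s ^ (2 ^ k + 1) + t ^ (2 ^ k + 1))"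
    by (simp add: frobenius_add[OF assms] algebra_simps)
  then show ?thesis
    using add_self_eq_0_if_CHAR_2[OF assms, of "s ^ (2 ^ k + 1) + t ^ (2 ^ k + 1)"]
    by (simp add: add.assoc)
qed

section \<open>The absolute trace\<close>

definition field_trace :: "nat \<Rightarrow> 'a::field \<Rightarrow> 'a" where
  "field_trace n x = (\<Sum>i<n. x ^ 2 ^ i)"

lemma Tr_eq_field_trace: "Tr n x = (if field_trace n x = 0 then 0 else 1)"
  by (simp add: Tr_def field_trace_def)

lemma Tr_0 [simp]: "Tr n 0 = 0"
  by (simp add: Tr_def power_0_left)

lemma field_trace_add:
  assumes "CHAR('a::field) = 2"
  shows "field_trace n (x + y :: 'a) = field_trace n x + field_trace n y"
  by (simp add: field_trace_def frobenius_add[OF assms] sum.distrib)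

lemma field_trace_square:
  assumes "card (UNIV :: 'a::{field,finite} set) = 2 ^ n"
  shows "(field_trace n x :: 'a) ^ 2 = field_trace n x"
proof -
  have char: "CHAR('a) = 2"
    by (rule CHAR_eq_2_if_card_eq_power_2[OF assms])
  have "(field_trace n x) ^ 2 = (\<Sum>i<n. x ^ 2 ^ Suc i)"
    unfolding field_trace_def
    by (subst freshmans_dream_sum'[where n=1]) (simp_all add: char mult.commute flip: power_mult)
  also have "\<dots> = (\<Sum>i<Suc n. x ^ 2 ^ i) - x"
    by (subst sum.lessThan_Suc_shift) simp
  also have "\<dots> = field_trace n x"
    using finite_field_power_card[of x] by (simp add: field_trace_def assms)
  finally show ?thesis .
qed

lemma field_trace_eq_0_or_1:
  assumes "card (UNIV :: 'a::{field,finite} set) = 2 ^ n"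
  shows "field_trace n (x :: 'a) = 0 \<or> field_trace n x = 1"
proof -
  have "field_trace n x * (field_trace n x - 1) = 0"
    using field_trace_square[OF assms, of x] by (simp add: right_diff_distrib power2_eq_square)
  then show ?thesis
    by simp
qed

lemma Tr_add:
  assumes "card (UNIV :: 'a::{field,finite} set) = 2 ^ n"
  shows "Tr n (x + y :: 'a) = Tr n x + Tr n y"
  using field_trace_eq_0_or_1[OF assms, of x] field_trace_eq_0_or_1[OF assms, of y]
    add_self_eq_0_if_CHAR_2[OF CHAR_eq_2_if_card_eq_power_2[OF assms], of "1::'a"]
  by (auto simp: Tr_eq_field_trace field_trace_add[OF CHAR_eq_2_if_card_eq_power_2[OF assms]])

lemma Tr_surj:
  assumes "card (UNIV :: 'a::{field,finite} set) = 2 ^ n"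
  shows "\<exists>x::'a. Tr n x = 1"
proof -
  have "n > 0"
    using pos_if_card_eq_power_2[OF assms] .
  define p :: "'a poly" where "p = (\<Sum>i<n. monom 1 (2 ^ i))"
  have "coeff p (2 ^ (n - 1)) = 1"
    using \<open>n > 0\<close> by (simp add: p_def coeff_sum)
  then have "p \<noteq> 0"
    by auto
  then have "card {x. poly p x = 0} \<le> degree p"
    by (rule card_poly_roots_bound)
  also have "degree p \<le> 2 ^ (n - 1)"
    unfolding p_def by (rule degree_sum_le) (auto simp: degree_monom_eq)
  also have "\<dots> < card (UNIV :: 'a set)"
    using \<open>n > 0\<close> assms by simp
  finally have "{x. poly p x = 0} \<noteq> UNIV"
    by auto
  then obtain x where "poly p x \<noteq> 0"
    by auto
  then have "field_trace n x \<noteq> 0"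
    by (simp add: p_def poly_sum poly_monom field_trace_def)
  then show ?thesis
    by (auto simp: Tr_eq_field_trace)
qed

lemma Tr_mult_eq_0_imp_eq_0:
  assumes "card (UNIV :: 'a::{field,finite} set) = 2 ^ n" and "\<forall>x. Tr n (x * c) = 0"
  shows "c = (0::'a)"
proof (rule ccontr)
  assume "c \<noteq> 0"
  obtain z :: 'a where "Tr n z = 1"
    using Tr_surj[OF assms(1)] ..
  with \<open>c \<noteq> 0\<close> have "Tr n ((z / c) * c) = 1"
    by simp
  moreover have "Tr n ((z / c) * c) = 0"
    using assms(2) by blast
  ultimately show False
    by simp
qed

section \<open>Linear functionals and character sums\<close>

lemma bit_add_eq_0_iff: "(a::bit) + b = 0 \<longleftrightarrow> a = b"
  by (cases a; cases b) simp_all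

lemma bit_add_self [simp]: "(a::bit) + a = 0"
  by (cases a) simp_all

lemma bit_add_self_left [simp]: "(a::bit) + (a + b) = b"
  by (simp flip: add.assoc)

lemma f2_linear_0: "f2_linear L \<Longrightarrow> L 0 = 0"
  unfolding f2_linear_def by (metis add.right_neutral add_left_cancel)

lemma f2_linear_diff: "f2_linear L \<Longrightarrow> L (x - y) = L x - L y"
  unfolding f2_linear_def by (metis add_diff_cancel diff_add_cancel)

lemma f2_linear_comp: "f2_linear L \<Longrightarrow> f2_linear M \<Longrightarrow> f2_linear (M \<circ> L)"
  by (simp add: f2_linear_def)

lemma f2_linear_inv:
  assumes "f2_linear L" "bij L"
  shows "f2_linear (inv L)"
  unfolding f2_linear_def
proof (intro allI)
  fix x y
  have "L (inv L x + inv L y) = x + y"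
    using assms by (simp add: f2_linear_def bij_is_surj surj_f_inv_f)
  then show "inv L (x + y) = inv L x + inv L y"
    using assms(2) by (metis bij_is_inj inv_f_f)
qed

lemma f2_linear_split:
  assumes "f2_linear (l :: 'a::ab_group_add \<times> 'b::ab_group_add \<Rightarrow> bit)"
  shows "l (x, y) = l (x, 0) + l (0, y)"
  using assms unfolding f2_linear_def by (metis add_Pair add.right_neutral add.left_neutral)

lemma f2_linear_Tr_mult:
  assumes "card (UNIV :: 'a::{field,finite} set) = 2 ^ n"
  shows "f2_linear (\<lambda>x::'a. Tr n (x * c))"
  by (simp add: f2_linear_def Tr_add[OF assms] distrib_right)

lemma chi_add: "chi (a + b) = chi a * chi b"
  by (cases a; cases b) (simp_all add: chi_def)

lemma chi_square: "(chi a)\<^sup>2 = 1"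
  by (cases a) (simp_all add: chi_def)

lemma sum_chi_f2_linear:
  fixes l :: "'w::{finite,ab_group_add} \<Rightarrow> bit"
  assumes "f2_linear l"
  shows "(\<Sum>x\<in>UNIV. chi (l x)) = (if \<forall>x. l x = 0 then int (card (UNIV :: 'w set)) else 0)"
proof (cases "\<forall>x. l x = 0")
  case False
  then obtain x0 where "l x0 = 1"
    by auto
  then have flip: "chi (l (x + x0)) = - chi (l x)" for x
    using assms by (simp add: f2_linear_def chi_add chi_def)
  have "(\<Sum>x\<in>UNIV. chi (l x)) = (\<Sum>x\<in>UNIV. chi (l (x + x0)))"
    by (rule sum.reindex_bij_witness[of _ "\<lambda>x. x + x0" "\<lambda>x. x - x0"]) auto
  also have "\<dots> = - (\<Sum>x\<in>UNIV. chi (l x))"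
    by (simp add: flip sum_negf)
  finally show ?thesis
    using False by simp
qed (simp add: chi_def)

lemma sum_chi_Tr_mult:
  assumes "card (UNIV :: 'a::{field,finite} set) = 2 ^ n"
  shows "(\<Sum>x\<in>UNIV. chi (Tr n (x * (c::'a)))) = (if c = 0 then int (card (UNIV :: 'a set)) else 0)"
proof -
  have "(\<forall>x. Tr n (x * c) = 0) \<longleftrightarrow> c = 0"
    using Tr_mult_eq_0_imp_eq_0[OF assms, of c] by auto
  then show ?thesis
    using sum_chi_f2_linear[OF f2_linear_Tr_mult[OF assms, of c]] by simp
qed

(* If no c worked, every inner character sum below would vanish; summing over c first
   instead shows that the double sum is the order of the field. *)
lemma f2_linear_eq_Tr_mult:
  assumes "card (UNIV :: 'a::{field,finite} set) = 2 ^ n" and "f2_linear (l :: 'a \<Rightarrow> bit)"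
  shows "\<exists>c. \<forall>x. l x = Tr n (x * c)"
proof (rule ccontr)
  assume none: "\<nexists>c. \<forall>x. l x = Tr n (x * c)"
  have "(\<Sum>x\<in>UNIV. chi (l x + Tr n (x * c))) = 0" for c
  proof -
    have "f2_linear (\<lambda>x. l x + Tr n (x * c))"
      using assms(2) f2_linear_Tr_mult[OF assms(1), of c] by (simp add: f2_linear_def ac_simps)
    moreover have "\<not> (\<forall>x. l x + Tr n (x * c) = 0)"
      using none by (simp add: bit_add_eq_0_iff)
    ultimately show ?thesis
      by (simp add: sum_chi_f2_linear)
  qed
  then have "(\<Sum>c\<in>UNIV. \<Sum>x\<in>UNIV. chi (l x + Tr n (x * c))) = 0"
    by simp
  moreover have "(\<Sum>c\<in>UNIV. \<Sum>x\<in>UNIV. chi (l x + Tr n (x * c))) = int (card (UNIV :: 'a set))"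
  proof -
    have "(\<Sum>c\<in>UNIV. \<Sum>x\<in>UNIV. chi (l x + Tr n (x * c)))
        = (\<Sum>x\<in>UNIV. chi (l x) * (\<Sum>c\<in>UNIV. chi (Tr n (c * x))))"
      by (subst sum.swap) (simp add: chi_add sum_distrib_left mult.commute)
    also have "\<dots> = chi (l 0) * int (card (UNIV :: 'a set))"
      by (simp add: sum_chi_Tr_mult[OF assms(1)] if_distrib cong: if_cong)
    finally show ?thesis
      by (simp add: f2_linear_0[OF assms(2)] chi_def)
  qed
  ultimately show False
    by (simp add: finite_UNIV_card_ge_0)
qed

section \<open>Bent functions\<close>

lemma walsh_comp_bij:
  assumes "bij (L :: 'w::{finite,ab_group_add} \<Rightarrow> 'w)"
  shows "walsh (F \<circ> L) l = walsh F (l \<circ> inv L)"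
  unfolding walsh_def
  using sum.reindex_bij_betw[of L UNIV UNIV "\<lambda>y. chi (F y + l (inv L y))"] assms
  by (simp add: bij_betw_def bij_is_inj)

lemma bent_comp_f2_linear:
  fixes L :: "'w::{finite,ab_group_add} \<Rightarrow> 'w"
  assumes "bent F" and "f2_linear L" and "bij L"
  shows "bent (F \<circ> L)"
  unfolding bent_def
proof (intro allI impI)
  fix l :: "'w \<Rightarrow> bit"
  assume "f2_linear l"
  then have "f2_linear (l \<circ> inv L)"
    using f2_linear_comp f2_linear_inv assms(2,3) by blast
  then show "(walsh (F \<circ> L) l)\<^sup>2 = int (card (UNIV :: 'w set))"
    using assms(1) by (simp add: walsh_comp_bij[OF assms(3)] bent_def)
qed

lemma walsh_pair:
  "walsh (F :: 'a::{finite,ab_group_add} \<times> 'b::{finite,ab_group_add} \<Rightarrow> bit) l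
     = (\<Sum>y\<in>UNIV. \<Sum>x\<in>UNIV. chi (F (x, y) + l (x, y)))"
proof -
  have "walsh F l = (\<Sum>x\<in>UNIV. \<Sum>y\<in>UNIV. chi (F (x, y) + l (x, y)))"
    unfolding walsh_def UNIV_Times_UNIV[symmetric] by (rule sum.cartesian_product')
  then show ?thesis
    by (simp add: sum.swap[of _ "UNIV :: 'a set"])
qed

definition maiorana_mcfarland :: "nat \<Rightarrow> ('a::field \<Rightarrow> 'a) \<Rightarrow> 'a \<times> 'a \<Rightarrow> bit" where
  "maiorana_mcfarland n \<pi> = (\<lambda>(x, y). Tr n (x * \<pi> y))"

lemma bent_maiorana_mcfarland:
  assumes "card (UNIV :: 'a::{field,finite} set) = 2 ^ n" and "bij (\<pi> :: 'a \<Rightarrow> 'a)"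
  shows "bent (maiorana_mcfarland n \<pi>)"
  unfolding bent_def
proof (intro allI impI)
  fix l :: "'a \<times> 'a \<Rightarrow> bit"
  assume l: "f2_linear l"
  have "f2_linear (\<lambda>x. l (x, 0))"
    using l unfolding f2_linear_def by (metis add_Pair add.right_neutral)
  then obtain c where c: "l (x, 0) = Tr n (x * c)" for x
    using f2_linear_eq_Tr_mult[OF assms(1)] by blast
  define y0 where "y0 = inv \<pi> c"
  have zero_iff: "\<pi> y + c = 0 \<longleftrightarrow> y = y0" for y
    using assms(2) add_eq_0_iff_eq_if_CHAR_2[OF CHAR_eq_2_if_card_eq_power_2[OF assms(1)]]
    by (metis bij_inv_eq_iff y0_def)
  have "chi (Tr n (x * \<pi> y) + l (x, y)) = chi (l (0, y)) * chi (Tr n (x * (\<pi> y + c)))" for x y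
    by (simp add: f2_linear_split[OF l, of x y] c chi_add distrib_left Tr_add[OF assms(1)])
  then have "walsh (maiorana_mcfarland n \<pi>) l
      = (\<Sum>y\<in>UNIV. chi (l (0, y)) * (\<Sum>x\<in>UNIV. chi (Tr n (x * (\<pi> y + c)))))"
    by (simp add: walsh_pair maiorana_mcfarland_def sum_distrib_left)
  also have "\<dots> = chi (l (0, y0)) * int (card (UNIV :: 'a set))"
    by (simp add: sum_chi_Tr_mult[OF assms(1)] zero_iff if_distrib cong: if_cong)
  finally have "(walsh (maiorana_mcfarland n \<pi>) l)\<^sup>2
      = (chi (l (0, y0)))\<^sup>2 * int (card (UNIV :: ('a \<times> 'a) set))"
    by (simp add: power_mult_distrib power2_eq_square card_cartesian_product
        flip: UNIV_Times_UNIV)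
  then show "(walsh (maiorana_mcfarland n \<pi>) l)\<^sup>2 = int (card (UNIV :: ('a \<times> 'a) set))"
    by (simp add: chi_square)
qed

section \<open>Second derivatives\<close>

definition second_derivative :: "('x::ab_group_add \<Rightarrow> bit) \<Rightarrow> 'x \<Rightarrow> 'x \<Rightarrow> 'x \<Rightarrow> bit" where
  "second_derivative h a b x = h (x + a + b) + h (x + a) + h (x + b) + h x"

lemma second_derivative_affine_transform:
  assumes "f2_linear L" and "f2_linear l" and "\<forall>x. g x = h (L x + a) + l x + c"
  shows "second_derivative g u v x = second_derivative h (L u) (L v) (L x + a)"
  using assms by (simp add: second_derivative_def f2_linear_def ac_simps)

lemma second_derivative_MM_sharp_form:
  assumes "card (UNIV :: 'a::{field,finite} set) = 2 ^ N"
  shows "second_derivative (\<lambda>(x, y). Tr N (x * \<pi> y) + g y) (u, 0) (v, 0) (p :: 'a \<times> 'a) = 0"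
  by (cases p) (simp add: second_derivative_def distrib_left distrib_right Tr_add[OF assms] ac_simps)

lemma MM_sharp_imp_flat:
  assumes "card (UNIV :: 'c::{field,finite} set) = 2 ^ N" and "MM_sharp N TYPE('c) h"
  shows "\<exists>V :: 'c \<Rightarrow> 'x::ab_group_add. f2_linear V \<and> inj V \<and>
    (\<forall>u v x. second_derivative h (V u) (V v) x = 0)"
proof -
  obtain \<phi> :: "'x \<Rightarrow> 'c \<times> 'c" and \<pi> g where \<phi>: "f2_linear \<phi>" "bij \<phi>"
    and "EA_equiv (\<lambda>(x, y). Tr N (x * \<pi> y) + g y) (h \<circ> inv \<phi>)"
    using assms(2) unfolding MM_sharp_def by blast
  then obtain L a l c where L: "f2_linear L" "bij L" and l: "f2_linear l"
    and EA: "\<forall>w. (h \<circ> inv \<phi>) w = (\<lambda>(x, y). Tr N (x * \<pi> y) + g y) (L w + a) + l w + c"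
    unfolding EA_equiv_def by blast
  have "\<forall>x. h x = (\<lambda>(x, y). Tr N (x * \<pi> y) + g y) ((L \<circ> \<phi>) x + a) + (l \<circ> \<phi>) x + c"
    using EA \<phi>(2) by (metis bij_is_inj comp_apply inv_f_f)
  note transform = second_derivative_affine_transform[OF f2_linear_comp[OF \<phi>(1) L(1)]
      f2_linear_comp[OF \<phi>(1) l] this]
  define V where "V u = inv \<phi> (inv L (u, 0))" for u
  have "f2_linear V"
    using f2_linear_inv[OF \<phi>] f2_linear_inv[OF L] unfolding V_def f2_linear_def
    by (metis add_Pair add.right_neutral)
  moreover have LV: "(L \<circ> \<phi>) (V u) = (u, 0)" for u
    using \<phi>(2) L(2) by (simp add: V_def bij_is_surj surj_f_inv_f)
  then have "inj V"
    by (metis injI prod.inject)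
  moreover from LV have "second_derivative h (V u) (V v) x = 0" for u v x
    by (simp add: transform second_derivative_MM_sharp_form[OF assms(1)])
  ultimately show ?thesis
    by blast
qed

lemma second_derivative_GMM_slice:
  assumes "card (UNIV :: 'b::{field,finite} set) = 2 ^ k"
    and "\<forall>x y z. f (x, y, z) = F z x + Tr k (y * z)"
  shows "second_derivative f (u, b, 0) (u', b', 0) (x, y, z :: 'b) = second_derivative (F z) u u' x"
  using assms(2)
  by (simp add: second_derivative_def distrib_left distrib_right Tr_add[OF assms(1)] ac_simps)

lemma second_derivative_maiorana_mcfarland:
  assumes "card (UNIV :: 'a::{field,finite} set) = 2 ^ n"
    and "\<forall>X. second_derivative (maiorana_mcfarland n \<pi>) (s, t) (s', t') (X, Y :: 'a) = 0"
  shows "\<pi> (Y + t + t') + \<pi> (Y + t) + \<pi> (Y + t') + \<pi> Y = 0"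
proof (rule Tr_mult_eq_0_imp_eq_0[OF assms(1)], rule allI)
  fix X
  have "second_derivative (maiorana_mcfarland n \<pi>) (s, t) (s', t') (X, Y)
      = Tr n (X * (\<pi> (Y + t + t') + \<pi> (Y + t) + \<pi> (Y + t') + \<pi> Y))
        + second_derivative (maiorana_mcfarland n \<pi>) (s, t) (s', t') (0, Y)"
    by (simp add: second_derivative_def maiorana_mcfarland_def distrib_left distrib_right
        Tr_add[OF assms(1)] ac_simps)
  then show "Tr n (X * (\<pi> (Y + t + t') + \<pi> (Y + t) + \<pi> (Y + t') + \<pi> Y)) = 0"
    using assms(2) by simp
qed

lemma gold_second_derivative_vanishing:
  assumes "card (UNIV :: 'a::{field,finite} set) = 2 ^ m" and "coprime k m"
    and "\<forall>X. second_derivative (maiorana_mcfarland m (\<lambda>y. y ^ (2 ^ k + 1)))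
      (s, t) (s', t') (X, 0 :: 'a) = 0"
  shows "t = 0 \<or> t' = 0 \<or> t = t'"
proof -
  have char: "CHAR('a) = 2"
    by (rule CHAR_eq_2_if_card_eq_power_2[OF assms(1)])
  have "t ^ 2 ^ k * t' + t * t' ^ 2 ^ k = 0"
    using second_derivative_maiorana_mcfarland[OF assms(1,3)] gold_power_add[OF char, of t t' k]
    by (simp add: power_0_left)
  then have "t ^ 2 ^ k * t' = t * t' ^ 2 ^ k"
    by (simp add: add_eq_0_iff_eq_if_CHAR_2[OF char])
  then show ?thesis
    by (rule frobenius_symmetric_imp_eq[OF assms(1,2)])
qed

lemma GMM_gold_flat_directions:
  fixes m k :: nat and f :: "('a::{field,finite} \<times> 'a) \<times> 'b::{field,finite} \<times> 'b \<Rightarrow> bit"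
  defines "G \<equiv> maiorana_mcfarland m (\<lambda>y::'a. y ^ (2 ^ k + 1))"
  assumes "card (UNIV :: 'a set) = 2 ^ m" and "card (UNIV :: 'b set) = 2 ^ k" and "coprime k m"
    and GMM: "\<forall>x y z. f (x, y, z) = F z x + Tr k (y * z)"
    and "F z0 = G" and "F z1 = G \<circ> prod.swap"
    and flat: "\<forall>p. second_derivative f ((s, t), b, 0) ((s', t'), b', 0) p = 0"
  shows "(s = 0 \<or> s' = 0 \<or> s = s') \<and> (t = 0 \<or> t' = 0 \<or> t = t')"
proof
  have "second_derivative (G \<circ> prod.swap) (s, t) (s', t') (0, X) = 0" for X
    using flat second_derivative_GMM_slice[OF assms(3) GMM, of "(s, t)" b "(s', t')" b' "(0, X)" 0 z1]
    by (simp add: \<open>F z1 = G \<circ> prod.swap\<close> comp_def)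
  then have "\<forall>X. second_derivative G (t, s) (t', s') (X, 0) = 0"
    by (simp add: second_derivative_def)
  then show "s = 0 \<or> s' = 0 \<or> s = s'"
    unfolding G_def by (rule gold_second_derivative_vanishing[OF assms(2,4)])
  have "\<forall>X. second_derivative G (s, t) (s', t') (X, 0) = 0"
    using flat second_derivative_GMM_slice[OF assms(3) GMM, of "(s, t)" b "(s', t')" b' _ 0 z0]
      \<open>F z0 = G\<close> by metis
  then show "t = 0 \<or> t' = 0 \<or> t = t'"
    unfolding G_def by (rule gold_second_derivative_vanishing[OF assms(2,4)])
qed

lemma card_le_2_if_unique_nonzero:
  fixes A :: "'a::zero set"
  assumes "\<forall>a\<in>A. \<forall>b\<in>A. a = 0 \<or> b = 0 \<or> a = b"
  shows "card A \<le> 2"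
proof -
  obtain a where "A \<subseteq> {0, a}"
    using assms by (metis insert_iff subsetI)
  then have "card A \<le> card {0, a}"
    by (rule card_mono[rotated]) simp
  also have "\<dots> \<le> 2"
    by (simp add: card_insert_if)
  finally show ?thesis .
qed

lemma card_le_card_mult_card_kernel:
  fixes \<phi> :: "'x::{finite,ab_group_add} \<Rightarrow> 'y::{finite,ab_group_add}"
  assumes "f2_linear \<phi>"
  shows "card (UNIV :: 'x set) \<le> card (UNIV :: 'y set) * card {x. \<phi> x = 0}"
proof -
  define rep where "rep y = (SOME x. \<phi> x = y)" for y
  have "\<phi> (rep (\<phi> x)) = \<phi> x" for x
    unfolding rep_def by (rule someI) (rule refl)
  then have "range (\<lambda>x. (\<phi> x, x - rep (\<phi> x))) \<subseteq> UNIV \<times> {x. \<phi> x = 0}"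
    by (auto simp: f2_linear_diff[OF assms])
  moreover have "inj (\<lambda>x. (\<phi> x, x - rep (\<phi> x)))"
    by (rule injI) auto
  ultimately have "card (UNIV :: 'x set) \<le> card ((UNIV :: 'y set) \<times> {x. \<phi> x = 0})"
    by (intro card_inj_on_le) auto
  then show ?thesis
    by (simp add: card_cartesian_product)
qed

lemma card_le_if_coordinates_unique_nonzero:
  fixes A :: "(('a::{finite,zero} \<times> 'a) \<times> 'b::{finite,zero} \<times> 'b) set"
  assumes "\<And>s t b c. ((s, t), b, c) \<in> A \<Longrightarrow> c = 0"
    and "\<And>s t b c s' t' b' c'. ((s, t), b, c) \<in> A \<Longrightarrow> ((s', t'), b', c') \<in> A \<Longrightarrow>
      (s = 0 \<or> s' = 0 \<or> s = s') \<and> (t = 0 \<or> t' = 0 \<or> t = t')"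
  shows "card A \<le> 4 * card (UNIV :: 'b set)"
proof -
  have "A \<subseteq> (fst ` fst ` A \<times> snd ` fst ` A) \<times> UNIV \<times> {0}"
    using assms(1) by force
  then have "card A \<le> card (fst ` fst ` A) * card (snd ` fst ` A) * card (UNIV :: 'b set)"
    using card_mono[OF _ \<open>A \<subseteq> _\<close>] by (simp add: card_cartesian_product)
  also have "\<dots> \<le> 2 * 2 * card (UNIV :: 'b set)"
    using assms(2) by (intro mult_right_mono mult_mono card_le_2_if_unique_nonzero) force+
  finally show ?thesis
    by simp
qed

lemma card_GMM_gold_flat_slice:
  fixes m k :: nat and f :: "('a::{field,finite} \<times> 'a) \<times> 'b::{field,finite} \<times> 'b \<Rightarrow> bit"
  defines "G \<equiv> maiorana_mcfarland m (\<lambda>y::'a. y ^ (2 ^ k + 1))"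
  assumes "card (UNIV :: 'a set) = 2 ^ m" and "card (UNIV :: 'b set) = 2 ^ k" and "coprime k m"
    and GMM: "\<forall>x y z. f (x, y, z) = F z x + Tr k (y * z)"
    and "F z0 = G" and "F z1 = G \<circ> prod.swap"
    and slice: "\<forall>a\<in>A. snd (snd a) = 0"
    and flat: "\<forall>a\<in>A. \<forall>a'\<in>A. \<forall>p. second_derivative f a a' p = 0"
  shows "card A \<le> 4 * 2 ^ k"
  unfolding assms(3)[symmetric]
proof (rule card_le_if_coordinates_unique_nonzero)
  show "c = 0" if "((s, t), b, c) \<in> A" for s t b c
    using slice that by force
  show "(s = 0 \<or> s' = 0 \<or> s = s') \<and> (t = 0 \<or> t' = 0 \<or> t = t')"
    if "((s, t), b, c) \<in> A" and "((s', t'), b', c') \<in> A" for s t b c s' t' b' c'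
  proof -
    have "c = 0" "c' = 0"
      using slice that by force+
    with that flat have "\<forall>p. second_derivative f ((s, t), b, 0) ((s', t'), b', 0) p = 0"
      by blast
    then show ?thesis
      using GMM_gold_flat_directions[OF assms(2-4) GMM \<open>F z0 = G\<close>[unfolded G_def]
          \<open>F z1 = G \<circ> prod.swap\<close>[unfolded G_def]] by blast
  qed
qed

lemma is_GMM_if_gold_components:
  fixes m k :: nat and f :: "('a::{field,finite} \<times> 'a) \<times> 'b::{field,finite} \<times> 'b \<Rightarrow> bit"
  defines "G \<equiv> maiorana_mcfarland m (\<lambda>y::'a. y ^ (2 ^ k + 1))"
  assumes "card (UNIV :: 'a set) = 2 ^ m" and "coprime k m" and "odd m"
    and GMM: "\<forall>x y z. f (x, y, z) = F z x + Tr k (y * z)"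
    and components: "\<forall>z. F z = G \<or> F z = G \<circ> prod.swap"
  shows "is_GMM k f"
proof -
  have "bent G"
    unfolding G_def by (rule bent_maiorana_mcfarland[OF assms(2) bij_gold_power[OF assms(2-4)]])
  moreover have "bent (G \<circ> prod.swap)"
    using bent_comp_f2_linear[OF \<open>bent G\<close>] by (simp add: f2_linear_def)
  ultimately have "\<forall>z. bent (F z)"
    using components by metis
  with GMM show ?thesis
    unfolding is_GMM_def by blast
qed

lemma not_MM_sharp_if_gold_components:
  fixes m k :: nat and f :: "('a::{field,finite} \<times> 'a) \<times> 'b::{field,finite} \<times> 'b \<Rightarrow> bit"
  defines "G \<equiv> maiorana_mcfarland m (\<lambda>y::'a. y ^ (2 ^ k + 1))"
  assumes "card (UNIV :: 'a set) = 2 ^ m" and "card (UNIV :: 'b set) = 2 ^ k" and "coprime k m"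
    and "m > k + 2" and "card (UNIV :: 'c::{field,finite} set) = 2 ^ (m + k)"
    and GMM: "\<forall>x y z. f (x, y, z) = F z x + Tr k (y * z)"
    and "F z0 = G" and "F z1 = G \<circ> prod.swap"
  shows "\<not> MM_sharp (m + k) TYPE('c) f"
proof
  assume "MM_sharp (m + k) TYPE('c) f"
  then obtain V :: "'c \<Rightarrow> ('a \<times> 'a) \<times> 'b \<times> 'b" where "f2_linear V" "inj V"
    and flat: "\<forall>u v x. second_derivative f (V u) (V v) x = 0"
    using MM_sharp_imp_flat[OF assms(6)] by blast
  define K where "K = {u. snd (snd (V u)) = 0}"
  have "card (V ` K) \<le> 4 * 2 ^ k"
    using card_GMM_gold_flat_slice[OF assms(2-4) GMM assms(8,9)[unfolded G_def]] flat
    by (simp add: K_def)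
  moreover have "card (V ` K) = card K"
    using \<open>inj V\<close> by (simp add: card_image inj_on_subset)
  moreover have "f2_linear (\<lambda>u. snd (snd (V u)))"
    using \<open>f2_linear V\<close> by (simp add: f2_linear_def)
  then have "2 ^ (m + k) \<le> 2 ^ k * card K"
    using card_le_card_mult_card_kernel assms(3,6) unfolding K_def by metis
  ultimately have "2 ^ (m + k) \<le> (2::nat) ^ (k + k + 2)"
    by (simp add: power_add)
  then have "m + k \<le> k + k + 2"
    by (rule power_le_imp_le_exp[rotated]) simp
  then show False
    using assms(5) by simp
qed

theorem corollary3p12:
  fixes m k :: nat
    and f :: "('a::{field,finite} \<times> 'a) \<times> 'b::{field,finite} \<times> 'b \<Rightarrow> bit"
  assumes "m > 0" and "k > 0" and "coprime k m" and "odd m" and "m > k + 2"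
    and "card (UNIV :: 'a set) = 2 ^ m" and "card (UNIV :: 'b set) = 2 ^ k"
    and "card (UNIV :: 'c::{field,finite} set) = 2 ^ (m + k)"
    and "\<And>x1 x2 y z. f ((x1, x2), y, z) =
           (if Tr k z = 0 then Tr m (x1 * x2 ^ (2 ^ k + 1)) else Tr m (x2 * x1 ^ (2 ^ k + 1)))
           + Tr k (y * z)"
  shows "is_GMM k f \<and> \<not> MM_sharp (m + k) TYPE('c) f"
proof -
  define G where "G = maiorana_mcfarland m (\<lambda>y::'a. y ^ (2 ^ k + 1))"
  define F where "F z = (if Tr k z = 0 then G else G \<circ> prod.swap)" for z :: 'b
  have GMM: "\<forall>x y z. f (x, y, z) = F z x + Tr k (y * z)"
    by (auto simp: F_def G_def maiorana_mcfarland_def assms(9))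
  obtain z1 :: 'b where "Tr k z1 = 1"
    using Tr_surj[OF assms(7)] by blast
  then have "F 0 = G" "F z1 = G \<circ> prod.swap" "\<forall>z. F z = G \<or> F z = G \<circ> prod.swap"
    by (simp_all add: F_def)
  then show ?thesis
    unfolding G_def
    using is_GMM_if_gold_components[OF assms(6,3,4) GMM]
      not_MM_sharp_if_gold_components[OF assms(6,7,3,5,8) GMM]
    by blast
qed

end
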